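(* Suppose that $G$ is a group with a finite-index characteristic subgroup $A\cong\mathbb{Z}^m$, and that there is a homomorphism $\operatorname{sgn}\colon G\to\{1,-1\}$ such that for all $g\in G$ and $x\in A$ we have $g^{-1}xg=x^{\operatorname{sgn}(g)}$. Then the group $P_{A,G}$ of automorphisms of $A$ that extend to automorphisms of $G$ has finite index in $\operatorname{Aut}(A)$. *)

theory Defs
  imports "HOL-Algebra.Algebra"
begin

text \<open>The free abelian group Z^m, written multiplicatively as a HOL-Algebra monoid:
  integer vectors indexed by 0..m-1 (zero outside), with componentwise addition.\<close>
definition Zpow :: "nat \<Rightarrow> (nat \<Rightarrow> int) monoid" where
  "Zpow m = \<lparr>carrier = {v. \<forall>i\<ge>m. v i = 0},
             monoid.mult = (\<lambda>v w. (\<lambda>i. v i + w i)),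
             one = (\<lambda>i. 0)\<rparr>"

definition characteristic :: "'a set \<Rightarrow> ('a, 'b) monoid_scheme \<Rightarrow> bool" where
  "characteristic A G \<longleftrightarrow> subgroup A G \<and> (\<forall>\<psi>\<in>auto G. \<psi> ` A = A)"

definition extendable_auts :: "'a set \<Rightarrow> ('a, 'b) monoid_scheme \<Rightarrow> ('a \<Rightarrow> 'a) set" where
  "extendable_auts A G =
     {\<phi> \<in> auto (G\<lparr>carrier := A\<rparr>). \<exists>\<psi>\<in>auto G. \<forall>x\<in>A. \<psi> x = \<phi> x}"

end

(*
  Let k be the index of A in G and identify A with Z^m via h.  Writing
  t_C g = a_{C,g} t_{Cg} for coset representatives t_C, the signed sum
  T g = (sum over C of sgn (t_C g) a_{C,g}) is a twisted transfer:
  T (x y) = sgn y T x + T y, and T a = k a on A.  If an automorphism chi of A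
  is congruent to the identity modulo k, then delta = (chi - 1)/k is additive,
  so f = delta o T satisfies f (x y) = y^-1 f x y f y and g |-> g f g is an
  automorphism of G; on A it is a |-> a + (chi a - a) = chi a.  Thus every
  automorphism of A acting trivially on A/kA extends to G, and as A/kA is finite,
  the extendable automorphisms have finite index.
*)

theory Submission
  imports Defs
begin

lemma Zpow_simps [simp]:
  "carrier (Zpow m) = {v. \<forall>i\<ge>m. v i = 0}"
  "monoid.mult (Zpow m) v w = (\<lambda>i. v i + w i)"
  "one (Zpow m) = (\<lambda>i. 0)"
  by (simp_all add: Zpow_def)

lemma comm_group_Zpow: "comm_group (Zpow m)"
proof (rule comm_groupI)
  fix v assume "v \<in> carrier (Zpow m)"
  then show "\<exists>w\<in>carrier (Zpow m). w \<otimes>\<^bsub>Zpow m\<^esub> v = \<one>\<^bsub>Zpow m\<^esub>"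
    by (intro bexI[of _ "\<lambda>i. - v i"]) auto
qed auto

lemma Zpow_nat_pow: "v [^]\<^bsub>Zpow m\<^esub> (n::nat) = (\<lambda>i. int n * v i)"
  by (induction n) (auto simp: algebra_simps)

lemma Zpow_inv:
  assumes "v \<in> carrier (Zpow m)"
  shows "inv\<^bsub>Zpow m\<^esub> v = (\<lambda>i. - v i)"
proof -
  interpret Z: comm_group "Zpow m" by (rule comm_group_Zpow)
  show ?thesis
    by (rule Z.inv_equality) (use assms in auto)
qed

lemma Zpow_int_pow:
  assumes "v \<in> carrier (Zpow m)"
  shows "v [^]\<^bsub>Zpow m\<^esub> (n::int) = (\<lambda>i. n * v i)"
proof -
  interpret Z: comm_group "Zpow m" by (rule comm_group_Zpow)
  show ?thesis
    using assms by (cases "n \<ge> 0") (auto simp: int_pow_def2 Zpow_nat_pow Zpow_inv)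
qed

section \<open>Twisting by a cocycle\<close>

lemma (in group) twist_by_cocycle_hom:
  assumes f: "f \<in> carrier G \<rightarrow> carrier G"
    and cocycle: "\<And>x y. x \<in> carrier G \<Longrightarrow> y \<in> carrier G \<Longrightarrow> f (x \<otimes> y) = inv y \<otimes> f x \<otimes> y \<otimes> f y"
  shows "(\<lambda>x\<in>carrier G. x \<otimes> f x) \<in> hom G G"
proof (rule homI)
  let ?\<psi> = "\<lambda>x\<in>carrier G. x \<otimes> f x"
  fix x y assume x: "x \<in> carrier G" and y: "y \<in> carrier G"
  have cancel: "y \<otimes> (inv y \<otimes> z) = z" if "z \<in> carrier G" for z
    using y that by (simp add: m_assoc[symmetric])
  have "x \<otimes> y \<otimes> (inv y \<otimes> f x \<otimes> y \<otimes> f y) = x \<otimes> f x \<otimes> (y \<otimes> f y)"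
    using f x y by (simp add: m_assoc Pi_iff cancel)
  then show "?\<psi> (x \<otimes> y) = ?\<psi> x \<otimes> ?\<psi> y"
    using x y by (simp add: cocycle)
qed (use f in auto)

lemma (in group) cocycle_one:
  assumes f: "f \<in> carrier G \<rightarrow> carrier G"
    and cocycle: "\<And>x y. x \<in> carrier G \<Longrightarrow> y \<in> carrier G \<Longrightarrow> f (x \<otimes> y) = inv y \<otimes> f x \<otimes> y \<otimes> f y"
  shows "f \<one> = \<one>"
proof -
  have f1: "f \<one> \<in> carrier G"
    using f by blast
  then have "f \<one> = f \<one> \<otimes> f \<one>"
    using cocycle[of \<one> \<one>] by simp
  then show ?thesis
    using f1 by simp
qed

lemma (in group) twist_by_cocycle_auto:
  assumes A: "subgroup A G" and f: "f \<in> carrier G \<rightarrow> A"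
    and cocycle: "\<And>x y. x \<in> carrier G \<Longrightarrow> y \<in> carrier G \<Longrightarrow> f (x \<otimes> y) = inv y \<otimes> f x \<otimes> y \<otimes> f y"
    and bij: "bij_betw (\<lambda>a. a \<otimes> f a) A A"
  shows "(\<lambda>x\<in>carrier G. x \<otimes> f x) \<in> auto G"
proof -
  let ?\<psi> = "\<lambda>x\<in>carrier G. x \<otimes> f x"
  have fA: "f x \<in> A" and fG: "f x \<in> carrier G" if "x \<in> carrier G" for x
    using f that subgroup.subset[OF A] by auto
  have "f \<in> carrier G \<rightarrow> carrier G"
    using fG by blast
  then have "?\<psi> \<in> hom G G" and f_one: "f \<one> = \<one>"
    using twist_by_cocycle_hom cocycle_one cocycle by blast+
  then interpret \<psi>: group_hom G G ?\<psi>
    by unfold_locales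
  have "z = \<one>" if z: "z \<in> carrier G" and "?\<psi> z = \<one>" for z
  proof -
    have "inv (f z) = z"
      using that fG by (simp add: inv_equality)
    moreover have "inv (f z) \<in> A"
      using fA[OF z] subgroup.m_inv_closed[OF A] by simp
    ultimately have zA: "z \<in> A"
      by simp
    have "z \<otimes> f z = \<one> \<otimes> f \<one>"
      using that f_one by simp
    then show "z = \<one>"
      using inj_onD[OF bij_betw_imp_inj_on[OF bij] _ zA subgroup.one_closed[OF A]] by simp
  qed
  moreover have "y \<in> ?\<psi> ` carrier G" if y: "y \<in> carrier G" for y
  proof -
    have "inv (f y) \<in> (\<lambda>a. a \<otimes> f a) ` A"
      using bij_betw_imp_surj_on[OF bij] fA[OF y] subgroup.m_inv_closed[OF A] by simp
    then obtain a where a: "a \<in> A" "a \<otimes> f a = inv (f y)"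
      by (metis imageE)
    have aG: "a \<in> carrier G"
      using a subgroup.mem_carrier[OF A] by blast
    have "?\<psi> (y \<otimes> a) = y \<otimes> f y \<otimes> inv (f y)"
      using \<psi>.hom_mult[OF y aG] y aG a by simp
    also have "\<dots> = y"
      using y fG by (simp add: m_assoc)
    finally show ?thesis
      using y aG m_closed by (metis image_eqI)
  qed
  ultimately have "?\<psi> \<in> iso G G"
    unfolding \<psi>.iso_iff by blast
  then show ?thesis
    by (simp add: auto_def Bij_def iso_def)
qed

section \<open>Extendable automorphisms\<close>

lemma carrier_AutoGroup: "carrier (AutoGroup G) = auto G"
  by (simp add: AutoGroup_def)

lemma AutoGroup_mult:
  "\<phi> \<in> auto G \<Longrightarrow> \<phi>' \<in> auto G \<Longrightarrow> \<phi> \<otimes>\<^bsub>AutoGroup G\<^esub> \<phi>' = compose (carrier G) \<phi> \<phi>'"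
  by (simp add: AutoGroup_def BijGroup_def auto_def)

lemma inv_AutoGroup:
  assumes "group G" "\<phi> \<in> auto G"
  shows "inv\<^bsub>AutoGroup G\<^esub> \<phi> = restrict (inv_into (carrier G) \<phi>) (carrier G)"
proof -
  have "inv\<^bsub>AutoGroup G\<^esub> \<phi> = inv\<^bsub>BijGroup (carrier G)\<^esub> \<phi>"
    unfolding AutoGroup_def
    by (rule group.m_inv_consistent[OF group_BijGroup group.subgroup_auto[OF assms(1)] assms(2)])
  then show ?thesis
    using assms(2) by (simp add: inv_BijGroup auto_def)
qed

lemma bij_betw_auto: "\<phi> \<in> auto G \<Longrightarrow> bij_betw \<phi> (carrier G) (carrier G)"
  by (simp add: auto_def Bij_def)

lemma (in group) extension_inv:
  assumes A: "subgroup A G" and \<phi>: "\<phi> \<in> auto (G\<lparr>carrier := A\<rparr>)" and \<psi>: "\<psi> \<in> auto G"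
    and ext: "\<forall>x\<in>A. \<psi> x = \<phi> x"
  shows "\<forall>x\<in>A. (inv\<^bsub>AutoGroup G\<^esub> \<psi>) x = (inv\<^bsub>AutoGroup (G\<lparr>carrier := A\<rparr>)\<^esub> \<phi>) x"
proof
  fix x assume x: "x \<in> A"
  define y where "y = inv_into A \<phi> x"
  have y: "y \<in> A" "\<phi> y = x"
    using bij_betw_auto[OF \<phi>] x unfolding y_def bij_betw_def
    by (simp_all add: inv_into_into f_inv_into_f)
  have "inv_into (carrier G) \<psi> (\<psi> y) = y"
    using bij_betw_auto[OF \<psi>] subgroup.mem_carrier[OF A y(1)] by (simp add: bij_betw_def)
  then show "(inv\<^bsub>AutoGroup G\<^esub> \<psi>) x = (inv\<^bsub>AutoGroup (G\<lparr>carrier := A\<rparr>)\<^esub> \<phi>) x"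
    using inv_AutoGroup[OF is_group \<psi>] inv_AutoGroup[OF subgroup.subgroup_is_group[OF A is_group] \<phi>]
      x y ext subgroup.mem_carrier[OF A]
    by (simp add: y_def)
qed

lemma (in group) extension_mult:
  assumes A: "subgroup A G"
    and \<phi>: "\<phi>1 \<in> auto (G\<lparr>carrier := A\<rparr>)" "\<phi>2 \<in> auto (G\<lparr>carrier := A\<rparr>)"
    and \<psi>: "\<psi>1 \<in> auto G" "\<psi>2 \<in> auto G"
    and ext: "\<forall>x\<in>A. \<psi>1 x = \<phi>1 x" "\<forall>x\<in>A. \<psi>2 x = \<phi>2 x"
  shows "\<forall>x\<in>A. (\<psi>1 \<otimes>\<^bsub>AutoGroup G\<^esub> \<psi>2) x = (\<phi>1 \<otimes>\<^bsub>AutoGroup (G\<lparr>carrier := A\<rparr>)\<^esub> \<phi>2) x"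
proof
  fix x assume x: "x \<in> A"
  have "\<phi>2 x \<in> A"
    using bij_betw_apply[OF bij_betw_auto[OF \<phi>(2)]] x by simp
  then show "(\<psi>1 \<otimes>\<^bsub>AutoGroup G\<^esub> \<psi>2) x = (\<phi>1 \<otimes>\<^bsub>AutoGroup (G\<lparr>carrier := A\<rparr>)\<^esub> \<phi>2) x"
    using AutoGroup_mult[OF \<psi>] AutoGroup_mult[OF \<phi>] ext x subgroup.mem_carrier[OF A]
    by (simp add: compose_def)
qed

lemma (in group) subgroup_extendable_auts:
  assumes A: "subgroup A G"
  shows "subgroup (extendable_auts A G) (AutoGroup (G\<lparr>carrier := A\<rparr>))"
proof -
  let ?A = "G\<lparr>carrier := A\<rparr>"
  interpret A: group ?A
    using subgroup.subgroup_is_group[OF A is_group] .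
  interpret AutA: group "AutoGroup ?A"
    by (rule A.AutoGroup)
  interpret AutG: group "AutoGroup G"
    by (rule AutoGroup)
  show ?thesis
  proof (rule AutA.subgroupI)
    show "extendable_auts A G \<subseteq> carrier (AutoGroup ?A)"
      by (auto simp: extendable_auts_def carrier_AutoGroup)
    have "(\<lambda>x\<in>A. x) \<in> auto ?A"
      using A.id_in_auto by simp
    moreover have "\<forall>x\<in>A. (\<lambda>x\<in>carrier G. x) x = (\<lambda>x\<in>A. x) x"
      using subgroup.mem_carrier[OF A] by simp
    ultimately have "(\<lambda>x\<in>A. x) \<in> extendable_auts A G"
      unfolding extendable_auts_def using id_in_auto by blast
    then show "extendable_auts A G \<noteq> {}"
      by blast
  next
    fix \<phi> assume "\<phi> \<in> extendable_auts A G"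
    then obtain \<psi> where \<phi>: "\<phi> \<in> auto ?A" and \<psi>: "\<psi> \<in> auto G" and ext: "\<forall>x\<in>A. \<psi> x = \<phi> x"
      unfolding extendable_auts_def by blast
    have "inv\<^bsub>AutoGroup ?A\<^esub> \<phi> \<in> auto ?A" "inv\<^bsub>AutoGroup G\<^esub> \<psi> \<in> auto G"
      using \<phi> \<psi> AutA.inv_closed AutG.inv_closed by (simp_all only: carrier_AutoGroup)
    then show "inv\<^bsub>AutoGroup ?A\<^esub> \<phi> \<in> extendable_auts A G"
      unfolding extendable_auts_def using extension_inv[OF A \<phi> \<psi> ext] by blast
  next
    fix \<phi>1 \<phi>2 assume "\<phi>1 \<in> extendable_auts A G" "\<phi>2 \<in> extendable_auts A G"
    then obtain \<psi>1 \<psi>2 where \<phi>: "\<phi>1 \<in> auto ?A" "\<phi>2 \<in> auto ?A" and \<psi>: "\<psi>1 \<in> auto G" "\<psi>2 \<in> auto G"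
      and ext: "\<forall>x\<in>A. \<psi>1 x = \<phi>1 x" "\<forall>x\<in>A. \<psi>2 x = \<phi>2 x"
      unfolding extendable_auts_def by blast
    have "\<phi>1 \<otimes>\<^bsub>AutoGroup ?A\<^esub> \<phi>2 \<in> auto ?A" "\<psi>1 \<otimes>\<^bsub>AutoGroup G\<^esub> \<psi>2 \<in> auto G"
      using \<phi> \<psi> AutA.m_closed AutG.m_closed by (simp_all only: carrier_AutoGroup)
    then show "\<phi>1 \<otimes>\<^bsub>AutoGroup ?A\<^esub> \<phi>2 \<in> extendable_auts A G"
      unfolding extendable_auts_def using extension_mult[OF A \<phi> \<psi> ext] by blast
  qed
qed

section \<open>The twisted transfer\<close>

locale signed_lattice_extension = group G for G (structure) +
  fixes A :: "'a set" and m :: nat and sgn :: "'a \<Rightarrow> int" and h :: "'a \<Rightarrow> nat \<Rightarrow> int"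
  assumes subgroup_A: "subgroup A G"
    and finite_rcosets_A: "finite (rcosets A)"
    and h_iso: "h \<in> iso (G\<lparr>carrier := A\<rparr>) (Zpow m)"
    and sgn_pm: "g \<in> carrier G \<Longrightarrow> sgn g \<in> {1, -1}"
    and sgn_mult: "g \<in> carrier G \<Longrightarrow> g' \<in> carrier G \<Longrightarrow> sgn (g \<otimes> g') = sgn g * sgn g'"
    and conj_A: "g \<in> carrier G \<Longrightarrow> x \<in> A \<Longrightarrow> inv g \<otimes> x \<otimes> g = x [^] sgn g"
begin

lemma A_carrier: "a \<in> A \<Longrightarrow> a \<in> carrier G"
  using subgroup.mem_carrier[OF subgroup_A] .

lemma group_A: "group (G\<lparr>carrier := A\<rparr>)"
  using subgroup.subgroup_is_group[OF subgroup_A is_group] .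

lemma h_group_hom: "group_hom (G\<lparr>carrier := A\<rparr>) (Zpow m) h"
  using group_A comm_group.axioms(2)[OF comm_group_Zpow] h_iso
  by (simp add: group_hom_def group_hom_axioms_def iso_def)

lemma h_bij: "bij_betw h A (carrier (Zpow m))"
  using h_iso by (simp add: iso_def)

lemma h_carrier: "a \<in> A \<Longrightarrow> h a \<in> carrier (Zpow m)"
  by (rule bij_betw_apply[OF h_bij])

lemma h_inject: "a \<in> A \<Longrightarrow> b \<in> A \<Longrightarrow> h a = h b \<longleftrightarrow> a = b"
  using h_bij inj_on_eq_iff[of h A a b] by (simp add: bij_betw_def)

lemma h_mult: "a \<in> A \<Longrightarrow> b \<in> A \<Longrightarrow> h (a \<otimes> b) = (\<lambda>i. h a i + h b i)"
  using group_hom.hom_mult[OF h_group_hom] by simp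

lemma h_one: "h \<one> = (\<lambda>i. 0)"
  using group_hom.hom_one[OF h_group_hom] by simp

lemma h_int_pow:
  assumes "a \<in> A"
  shows "h (a [^] (n::int)) = (\<lambda>i. n * h a i)"
proof -
  have "h (a [^] n) = h a [^]\<^bsub>Zpow m\<^esub> n"
    unfolding int_pow_consistent[OF subgroup_A assms]
    using group_hom.hom_int_pow[OF h_group_hom] assms by simp
  then show ?thesis
    using Zpow_int_pow[OF h_carrier[OF assms]] by simp
qed

lemma int_pow_closed_A: "a \<in> A \<Longrightarrow> a [^] (n::int) \<in> A"
  unfolding int_pow_consistent[OF subgroup_A]
  using group.int_pow_closed[OF group_A] by simp

definition hinv :: "(nat \<Rightarrow> int) \<Rightarrow> 'a" where
  "hinv = inv_into A h"

lemma hinv_in_A: "v \<in> carrier (Zpow m) \<Longrightarrow> hinv v \<in> A"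
  unfolding hinv_def using h_bij by (metis bij_betw_def inv_into_into)

lemma h_hinv: "v \<in> carrier (Zpow m) \<Longrightarrow> h (hinv v) = v"
  unfolding hinv_def using h_bij by (metis bij_betw_def f_inv_into_f)

lemma hinv_h: "a \<in> A \<Longrightarrow> hinv (h a) = a"
  unfolding hinv_def using h_bij by (metis bij_betw_def inv_into_f_f)

lemma h_int_pow_mult: "x \<in> A \<Longrightarrow> y \<in> A \<Longrightarrow> h (x [^] (s::int) \<otimes> y) = (\<lambda>i. s * h x i + h y i)"
  by (simp add: h_mult int_pow_closed_A h_int_pow)

lemma hinv_lin:
  assumes v: "v \<in> carrier (Zpow m)" and w: "w \<in> carrier (Zpow m)"
  shows "hinv (\<lambda>i. s * v i + w i) = hinv v [^] s \<otimes> hinv w"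
proof -
  have "hinv v [^] s \<otimes> hinv w \<in> A"
    using hinv_in_A v w int_pow_closed_A subgroup.m_closed[OF subgroup_A] by blast
  moreover have "h (hinv v [^] s \<otimes> hinv w) = (\<lambda>i. s * v i + w i)"
    using h_int_pow_mult hinv_in_A h_hinv v w by simp
  ultimately show ?thesis
    using hinv_h by metis
qed

lemma auto_A_closed: "p \<in> auto (G\<lparr>carrier := A\<rparr>) \<Longrightarrow> x \<in> A \<Longrightarrow> p x \<in> A"
  by (auto simp: auto_def hom_def)

lemma auto_A_int_pow_mult:
  assumes p: "p \<in> auto (G\<lparr>carrier := A\<rparr>)" and x: "x \<in> A" and y: "y \<in> A"
  shows "p (x [^] (s::int) \<otimes> y) = p x [^] s \<otimes> p y"
proof -
  interpret p: group_hom "G\<lparr>carrier := A\<rparr>" "G\<lparr>carrier := A\<rparr>" p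
    using p group_A by (simp add: group_hom_def group_hom_axioms_def auto_def)
  show ?thesis
    using p.hom_mult p.hom_int_pow int_pow_consistent[OF subgroup_A] x y int_pow_closed_A auto_A_closed[OF p]
    by simp
qed

lemma sgn_one: "sgn \<one> = 1"
  using sgn_mult[of \<one> \<one>] sgn_pm[of \<one>] by auto

lemma sgn_inv: "g \<in> carrier G \<Longrightarrow> sgn (inv g) = sgn g"
  using sgn_mult[of g "inv g"] sgn_pm[of g] sgn_pm[of "inv g"] sgn_one by auto

lemma conj_A_inv: "g \<in> carrier G \<Longrightarrow> a \<in> A \<Longrightarrow> g \<otimes> a \<otimes> inv g = a [^] sgn g"
  using conj_A[of "inv g" a] sgn_inv by simp

lemma sgn_A: "a \<in> A \<Longrightarrow> sgn a = 1"
proof (rule ccontr)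
  assume a: "a \<in> A" and "sgn a \<noteq> 1"
  then have "sgn a = -1"
    using sgn_pm A_carrier by blast
  then have "a = a [^] (-1::int)"
    using conj_A[OF A_carrier[OF a] a] A_carrier[OF a] by (simp add: m_assoc)
  then have "h a = (\<lambda>i. - h a i)"
    using h_int_pow[OF a, of "-1"] by simp
  then have "h a = h \<one>"
    by (auto simp: h_one fun_eq_iff)
  then have "a = \<one>"
    using h_inject a subgroup.one_closed[OF subgroup_A] by blast
  with \<open>sgn a \<noteq> 1\<close> show False
    using sgn_one by simp
qed

lemma sgn_eq_if_quotient_in_A:
  assumes "x \<in> carrier G" "y \<in> carrier G" "x \<otimes> inv y \<in> A"
  shows "sgn x = sgn y"
proof -
  have "sgn x = sgn (x \<otimes> inv y) * sgn y"
    using assms sgn_mult[of "x \<otimes> inv y" y] by (simp add: m_assoc)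
  then show ?thesis
    using sgn_A assms(3) by simp
qed

definition k :: nat where
  "k = card (rcosets A)"

lemma k_pos: "k > 0"
proof -
  have "A #> \<one> \<in> rcosets A"
    using rcosetsI subgroup.subset[OF subgroup_A] by blast
  then show ?thesis
    unfolding k_def using finite_rcosets_A card_gt_0_iff by blast
qed

lemma rcosets_A_subset: "C \<in> rcosets A \<Longrightarrow> C \<subseteq> carrier G"
  by (rule subgroup.rcosets_carrier[OF subgroup_A is_group])

lemma rcosets_A_mult: "C \<in> rcosets A \<Longrightarrow> g \<in> carrier G \<Longrightarrow> C #> g \<in> rcosets A"
  unfolding RCOSETS_def using coset_mult_assoc subgroup.subset[OF subgroup_A] by auto

lemma bij_rcosets_A_mult:
  assumes g: "g \<in> carrier G"
  shows "bij_betw (\<lambda>C. C #> g) (rcosets A) (rcosets A)"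
proof (rule bij_betw_byWitness[where f' = "\<lambda>C. C #> inv g"])
  show "\<forall>C\<in>rcosets A. C #> g #> inv g = C" "\<forall>C\<in>rcosets A. C #> inv g #> g = C"
    using rcosets_A_subset coset_mult_assoc g by simp_all
  show "(\<lambda>C. C #> g) ` (rcosets A) \<subseteq> rcosets A" "(\<lambda>C. C #> inv g) ` (rcosets A) \<subseteq> rcosets A"
    using rcosets_A_mult g by auto
qed

lemma rcosets_A_mult_A:
  assumes C: "C \<in> rcosets A" and a: "a \<in> A"
  shows "C #> a = C"
proof -
  obtain x where x: "x \<in> carrier G" "C = A #> x"
    using C unfolding RCOSETS_def by blast
  have "x \<otimes> a = (x \<otimes> a \<otimes> inv x) \<otimes> x"
    using x A_carrier[OF a] by (simp add: m_assoc)
  moreover have "x \<otimes> a \<otimes> inv x \<in> A"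
    using conj_A_inv[OF x(1) a] int_pow_closed_A[OF a] by simp
  ultimately have "x \<otimes> a \<in> A #> x"
    using rcosI[OF _ subgroup.subset[OF subgroup_A] x(1)] by metis
  then show ?thesis
    using repr_independence[OF _ x(1) subgroup_A] coset_mult_assoc subgroup.subset[OF subgroup_A] x A_carrier[OF a]
    by simp
qed

definition rep :: "'a set \<Rightarrow> 'a" where
  "rep C = (SOME x. x \<in> C)"

lemma rep_in: "C \<in> rcosets A \<Longrightarrow> rep C \<in> C"
  unfolding rep_def using subgroup.rcosets_non_empty[OF subgroup_A] by (simp add: some_in_eq)

lemma rep_carrier: "C \<in> rcosets A \<Longrightarrow> rep C \<in> carrier G"
  using rep_in rcosets_A_subset by blast

definition transfer_factor :: "'a set \<Rightarrow> 'a \<Rightarrow> 'a" where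
  "transfer_factor C g = rep C \<otimes> g \<otimes> inv (rep (C #> g))"

lemma transfer_factor_in_A:
  assumes C: "C \<in> rcosets A" and g: "g \<in> carrier G"
  shows "transfer_factor C g \<in> A"
proof -
  have "rep C \<otimes> g \<in> C #> g"
    using rep_in[OF C] by (auto simp: r_coset_def)
  then show ?thesis
    unfolding transfer_factor_def
    using diff_neutralizes[OF subgroup_A rcosets_A_mult[OF C g]] rep_in[OF rcosets_A_mult[OF C g]]
    by blast
qed

lemma transfer_factor_mult:
  assumes C: "C \<in> rcosets A" and g1: "g1 \<in> carrier G" and g2: "g2 \<in> carrier G"
  shows "transfer_factor C (g1 \<otimes> g2) = transfer_factor C g1 \<otimes> transfer_factor (C #> g1) g2"
proof -
  have "C #> g1 #> g2 = C #> (g1 \<otimes> g2)"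
    using coset_mult_assoc rcosets_A_subset[OF C] g1 g2 by simp
  moreover have "d \<otimes> inv d' \<otimes> (d' \<otimes> g2 \<otimes> inv w) = d \<otimes> g2 \<otimes> inv w"
    if "d \<in> carrier G" "d' \<in> carrier G" "w \<in> carrier G" for d d' w
    using that g2 by (simp add: m_assoc flip: m_assoc[of "inv d'" d'])
  ultimately show ?thesis
    unfolding transfer_factor_def
    using rep_carrier C rcosets_A_mult g1 g2 by (simp add: m_assoc)
qed

lemma sgn_rep_mult:
  assumes C: "C \<in> rcosets A" and g1: "g1 \<in> carrier G" and g2: "g2 \<in> carrier G"
  shows "sgn (rep C \<otimes> (g1 \<otimes> g2)) = sgn g2 * sgn (rep C \<otimes> g1)"
    and "sgn (rep C \<otimes> (g1 \<otimes> g2)) = sgn (rep (C #> g1) \<otimes> g2)"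
proof -
  have c: "rep C \<in> carrier G" and d: "rep (C #> g1) \<in> carrier G"
    using rep_carrier C rcosets_A_mult g1 by auto
  show "sgn (rep C \<otimes> (g1 \<otimes> g2)) = sgn g2 * sgn (rep C \<otimes> g1)"
    using sgn_mult[of "rep C \<otimes> g1" g2] c g1 g2 by (simp add: m_assoc)
  have "rep C \<otimes> (g1 \<otimes> g2) \<otimes> inv (rep (C #> g1) \<otimes> g2) = transfer_factor C g1"
    unfolding transfer_factor_def
    using c d g1 g2 by (simp add: m_assoc inv_mult_group flip: m_assoc[of g2 "inv g2"])
  then show "sgn (rep C \<otimes> (g1 \<otimes> g2)) = sgn (rep (C #> g1) \<otimes> g2)"
    using sgn_eq_if_quotient_in_A transfer_factor_in_A[OF C g1] c d g1 g2 by simp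
qed

definition transfer :: "'a \<Rightarrow> nat \<Rightarrow> int" where
  "transfer g = (\<lambda>i. \<Sum>C\<in>rcosets A. sgn (rep C \<otimes> g) * h (transfer_factor C g) i)"

lemma transfer_mult:
  assumes g1: "g1 \<in> carrier G" and g2: "g2 \<in> carrier G"
  shows "transfer (g1 \<otimes> g2) = (\<lambda>i. sgn g2 * transfer g1 i + transfer g2 i)"
proof
  fix i
  let ?t = "\<lambda>C g. sgn (rep C \<otimes> g) * h (transfer_factor C g) i"
  have "?t C (g1 \<otimes> g2) = sgn g2 * ?t C g1 + ?t (C #> g1) g2" if C: "C \<in> rcosets A" for C
    using sgn_rep_mult[OF C g1 g2] transfer_factor_mult[OF C g1 g2]
      h_mult transfer_factor_in_A C rcosets_A_mult g1 g2
    by (simp add: algebra_simps)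
  then have "transfer (g1 \<otimes> g2) i = sgn g2 * transfer g1 i + (\<Sum>C\<in>rcosets A. ?t (C #> g1) g2)"
    unfolding transfer_def by (simp add: sum.distrib sum_distrib_left)
  also have "(\<Sum>C\<in>rcosets A. ?t (C #> g1) g2) = transfer g2 i"
    unfolding transfer_def using sum.reindex_bij_betw[OF bij_rcosets_A_mult[OF g1]] by simp
  finally show "transfer (g1 \<otimes> g2) i = sgn g2 * transfer g1 i + transfer g2 i" .
qed

lemma transfer_A:
  assumes a: "a \<in> A"
  shows "transfer a = (\<lambda>i. int k * h a i)"
proof -
  have "sgn (rep C \<otimes> a) * h (transfer_factor C a) i = h a i" if C: "C \<in> rcosets A" for C i
  proof -
    have c: "rep C \<in> carrier G"
      using rep_carrier[OF C] .
    have pm: "sgn (rep C) \<in> {1, -1}"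
      using sgn_pm[OF c] .
    have "transfer_factor C a = a [^] sgn (rep C)"
      unfolding transfer_factor_def rcosets_A_mult_A[OF C a] using conj_A_inv[OF c a] .
    moreover have "sgn (rep C \<otimes> a) = sgn (rep C)"
      using sgn_mult[OF c A_carrier[OF a]] sgn_A[OF a] by simp
    ultimately show ?thesis
      using h_int_pow[OF a] pm by auto
  qed
  then show ?thesis
    unfolding transfer_def k_def by simp
qed

lemma transfer_carrier: "g \<in> carrier G \<Longrightarrow> transfer g \<in> carrier (Zpow m)"
  using h_carrier transfer_factor_in_A by (simp add: transfer_def)

section \<open>Automorphisms modulo the index\<close>

definition red :: "(nat \<Rightarrow> int) \<Rightarrow> nat \<Rightarrow> int" where
  "red v = (\<lambda>i. v i mod int k)"

lemma red_carrier: "v \<in> carrier (Zpow m) \<Longrightarrow> red v \<in> carrier (Zpow m)"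
  by (simp add: red_def)

lemma finite_red_image: "finite (red ` carrier (Zpow m))"
proof -
  have "red ` carrier (Zpow m) \<subseteq>
      {v. \<forall>i. (i \<in> {..<m} \<longrightarrow> v i \<in> {0..<int k}) \<and> (i \<notin> {..<m} \<longrightarrow> v i = 0)}"
    using k_pos by (auto simp: red_def)
  then show ?thesis
    using finite_set_of_finite_funs[of "{..<m}" "{0..<int k}" 0] finite_subset by blast
qed

lemma red_auto_A:
  assumes p: "p \<in> auto (G\<lparr>carrier := A\<rparr>)" and a: "a \<in> A"
  shows "red (h (p a)) = red (h (p (hinv (red (h a)))))"
proof -
  define w where "w = (\<lambda>i. h a i div int k)"
  have w: "w \<in> carrier (Zpow m)" and r: "red (h a) \<in> carrier (Zpow m)"
    using h_carrier[OF a] red_carrier by (auto simp: w_def)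
  have "h a = (\<lambda>i. int k * w i + red (h a) i)"
    by (simp add: w_def red_def)
  then have decomp: "hinv w [^] int k \<otimes> hinv (red (h a)) = a"
    using hinv_lin[OF w r] hinv_h[OF a] by metis
  have "h (p (hinv w [^] int k \<otimes> hinv (red (h a))))
      = (\<lambda>i. int k * h (p (hinv w)) i + h (p (hinv (red (h a)))) i)"
    using auto_A_int_pow_mult[OF p] h_int_pow_mult auto_A_closed[OF p] hinv_in_A w r by simp
  then have "h (p a) = (\<lambda>i. int k * h (p (hinv w)) i + h (p (hinv (red (h a)))) i)"
    by (simp only: decomp)
  then show ?thesis
    by (simp add: red_def)
qed

text \<open>The action of an automorphism on A/kA, whose elements are represented by the
  reduced coordinate vectors.\<close>

definition classify :: "('a \<Rightarrow> 'a) \<Rightarrow> (nat \<Rightarrow> int) \<Rightarrow> nat \<Rightarrow> int" where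
  "classify p = (\<lambda>v\<in>red ` carrier (Zpow m). red (h (p (hinv v))))"

lemma finite_classify_image: "finite (classify ` auto (G\<lparr>carrier := A\<rparr>))"
proof -
  have "classify p \<in> red ` carrier (Zpow m) \<rightarrow>\<^sub>E red ` carrier (Zpow m)"
    if p: "p \<in> auto (G\<lparr>carrier := A\<rparr>)" for p
    unfolding classify_def restrict_PiE_iff
  proof
    fix v assume "v \<in> red ` carrier (Zpow m)"
    then obtain u where "v = red u" "u \<in> carrier (Zpow m)"
      by (rule imageE)
    then have "v \<in> carrier (Zpow m)"
      using red_carrier by simp
    then have "h (p (hinv v)) \<in> carrier (Zpow m)"
      by (intro h_carrier auto_A_closed[OF p] hinv_in_A)
    then show "red (h (p (hinv v))) \<in> red ` carrier (Zpow m)"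
      by (rule imageI)
  qed
  then have "classify ` auto (G\<lparr>carrier := A\<rparr>) \<subseteq> red ` carrier (Zpow m) \<rightarrow>\<^sub>E red ` carrier (Zpow m)"
    by (rule image_subsetI)
  then show ?thesis
    by (rule finite_subset) (intro finite_PiE finite_red_image)
qed

lemma red_eq_if_classify_eq:
  assumes p1: "p1 \<in> auto (G\<lparr>carrier := A\<rparr>)" and p2: "p2 \<in> auto (G\<lparr>carrier := A\<rparr>)"
    and eq: "classify p1 = classify p2" and a: "a \<in> A"
  shows "red (h (p1 a)) = red (h (p2 a))"
proof -
  have "classify p1 (red (h a)) = classify p2 (red (h a))"
    using eq by simp
  moreover have "red (h a) \<in> red ` carrier (Zpow m)"
    using h_carrier[OF a] by (rule imageI)
  ultimately have "red (h (p1 (hinv (red (h a))))) = red (h (p2 (hinv (red (h a)))))"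
    by (simp add: classify_def)
  then show ?thesis
    using red_auto_A[OF p1 a] red_auto_A[OF p2 a] by simp
qed

end

section \<open>Automorphisms congruent to the identity extend\<close>

locale congruent_automorphism = signed_lattice_extension +
  fixes \<chi> :: "'a \<Rightarrow> 'a"
  assumes chi_auto: "\<chi> \<in> auto (G\<lparr>carrier := A\<rparr>)"
    and chi_cong: "a \<in> A \<Longrightarrow> red (h (\<chi> a)) = red (h a)"
begin

definition chi_coord :: "(nat \<Rightarrow> int) \<Rightarrow> nat \<Rightarrow> int" where
  "chi_coord v = h (\<chi> (hinv v))"

lemma chi_coord_carrier: "v \<in> carrier (Zpow m) \<Longrightarrow> chi_coord v \<in> carrier (Zpow m)"
  unfolding chi_coord_def using h_carrier auto_A_closed[OF chi_auto] hinv_in_A by blast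

lemma chi_coord_lin:
  assumes "v \<in> carrier (Zpow m)" "w \<in> carrier (Zpow m)"
  shows "chi_coord (\<lambda>i. s * v i + w i) = (\<lambda>i. s * chi_coord v i + chi_coord w i)"
  unfolding chi_coord_def hinv_lin[OF assms]
  using assms hinv_in_A auto_A_int_pow_mult[OF chi_auto] auto_A_closed[OF chi_auto] h_int_pow_mult
  by simp

lemma chi_coord_dvd: "v \<in> carrier (Zpow m) \<Longrightarrow> int k dvd chi_coord v i - v i"
  using chi_cong[OF hinv_in_A] h_hinv unfolding chi_coord_def red_def
  by (metis mod_eq_dvd_iff)

lemma chi_coord_zero: "chi_coord (\<lambda>i. 0) = (\<lambda>i. 0)"
  using chi_coord_lin[of "\<lambda>i. 0" "\<lambda>i. 0" 1] by (simp add: fun_eq_iff)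

text \<open>The coordinates of (\<chi> - 1)/k; the division is exact by chi_coord_dvd.\<close>

definition chi_quot :: "(nat \<Rightarrow> int) \<Rightarrow> nat \<Rightarrow> int" where
  "chi_quot v = (\<lambda>i. (chi_coord v i - v i) div int k)"

lemma chi_quot_carrier: "v \<in> carrier (Zpow m) \<Longrightarrow> chi_quot v \<in> carrier (Zpow m)"
  using chi_coord_carrier by (simp add: chi_quot_def)

lemma chi_quot_lin:
  assumes v: "v \<in> carrier (Zpow m)" and w: "w \<in> carrier (Zpow m)"
  shows "chi_quot (\<lambda>i. s * v i + w i) = (\<lambda>i. s * chi_quot v i + chi_quot w i)"
proof
  fix i
  obtain x y where "chi_coord v i - v i = int k * x" "chi_coord w i - w i = int k * y"
    using chi_coord_dvd[OF v] chi_coord_dvd[OF w] by (metis dvdE)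
  moreover have "chi_coord (\<lambda>i. s * v i + w i) i - (s * v i + w i)
      = s * (chi_coord v i - v i) + (chi_coord w i - w i)"
    using chi_coord_lin[OF v w] by (simp add: algebra_simps)
  ultimately show "chi_quot (\<lambda>i. s * v i + w i) i = s * chi_quot v i + chi_quot w i"
    unfolding chi_quot_def using k_pos by (simp add: algebra_simps)
qed

definition correction :: "'a \<Rightarrow> 'a" where
  "correction g = hinv (chi_quot (transfer g))"

lemma correction_in_A: "g \<in> carrier G \<Longrightarrow> correction g \<in> A"
  unfolding correction_def using hinv_in_A chi_quot_carrier transfer_carrier by blast

lemma correction_cocycle:
  assumes x: "x \<in> carrier G" and y: "y \<in> carrier G"
  shows "correction (x \<otimes> y) = inv y \<otimes> correction x \<otimes> y \<otimes> correction y"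
proof -
  have "correction (x \<otimes> y) = correction x [^] sgn y \<otimes> correction y"
    unfolding correction_def transfer_mult[OF x y]
    using chi_quot_lin hinv_lin chi_quot_carrier transfer_carrier x y by simp
  then show ?thesis
    using conj_A[OF y correction_in_A[OF x]] by simp
qed

lemma correction_A:
  assumes a: "a \<in> A"
  shows "a \<otimes> correction a = \<chi> a"
proof -
  have "chi_coord (\<lambda>i. int k * h a i) = (\<lambda>i. int k * h (\<chi> a) i)"
    using chi_coord_lin[of "h a" "\<lambda>i. 0" "int k"] chi_coord_zero h_carrier[OF a] hinv_h[OF a]
    by (simp add: chi_coord_def)
  then have "chi_quot (transfer a) = h (a [^] (-1::int) \<otimes> \<chi> a)"
    unfolding chi_quot_def transfer_A[OF a]
    using h_int_pow_mult[OF a auto_A_closed[OF chi_auto a]] k_pos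
    by (simp flip: right_diff_distrib)
  then have "correction a = inv a \<otimes> \<chi> a"
    unfolding correction_def
    using hinv_h subgroup.m_closed[OF subgroup_A subgroup.m_inv_closed[OF subgroup_A a] auto_A_closed[OF chi_auto a]]
      int_pow_neg[OF A_carrier[OF a], of 1] A_carrier[OF a]
    by simp
  then show ?thesis
    using A_carrier a auto_A_closed[OF chi_auto] by (simp flip: m_assoc)
qed

lemma extendable: "\<chi> \<in> extendable_auts A G"
proof -
  have "bij_betw \<chi> A A"
    using bij_betw_auto[OF chi_auto] by simp
  then have "bij_betw (\<lambda>a. a \<otimes> correction a) A A"
    by (rule bij_betw_cong[THEN iffD2, rotated]) (simp add: correction_A)
  moreover have "correction \<in> carrier G \<rightarrow> A"
    using correction_in_A by (rule funcsetI)
  ultimately have "(\<lambda>x\<in>carrier G. x \<otimes> correction x) \<in> auto G"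
    using twist_by_cocycle_auto[OF subgroup_A _ correction_cocycle] by blast
  moreover have "\<forall>a\<in>A. (\<lambda>x\<in>carrier G. x \<otimes> correction x) a = \<chi> a"
    using correction_A A_carrier by simp
  ultimately show ?thesis
    unfolding extendable_auts_def using chi_auto by blast
qed

end

section \<open>Finite index\<close>

lemma (in group) finite_rcosets_if_fibres_in_cosets:
  assumes H: "subgroup H G" and fin: "finite (\<kappa> ` carrier G)"
    and fibres: "\<And>x y. x \<in> carrier G \<Longrightarrow> y \<in> carrier G \<Longrightarrow> \<kappa> x = \<kappa> y \<Longrightarrow> x \<otimes> inv y \<in> H"
  shows "finite (rcosets H)"
proof -
  define pick where "pick c = (SOME x. x \<in> carrier G \<and> \<kappa> x = c)" for c
  have "H #> x = H #> pick (\<kappa> x)" if x: "x \<in> carrier G" for x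
  proof -
    have p: "pick (\<kappa> x) \<in> carrier G" "\<kappa> (pick (\<kappa> x)) = \<kappa> x"
      unfolding pick_def using someI[of "\<lambda>y. y \<in> carrier G \<and> \<kappa> y = \<kappa> x" x] x by auto
    then have "x \<in> H #> pick (\<kappa> x)"
      using subgroup.rcos_module_rev[OF H is_group] fibres x by metis
    then show ?thesis
      using repr_independence[OF _ p(1) H] by simp
  qed
  then have "rcosets H \<subseteq> (\<lambda>c. H #> pick c) ` \<kappa> ` carrier G"
    unfolding RCOSETS_def by blast
  then show ?thesis
    using fin finite_subset by blast
qed

context signed_lattice_extension
begin

lemma extendable_if_classify_eq:
  assumes p1: "p1 \<in> auto (G\<lparr>carrier := A\<rparr>)" and p2: "p2 \<in> auto (G\<lparr>carrier := A\<rparr>)"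
    and eq: "classify p1 = classify p2"
  shows "p1 \<otimes>\<^bsub>AutoGroup (G\<lparr>carrier := A\<rparr>)\<^esub> inv\<^bsub>AutoGroup (G\<lparr>carrier := A\<rparr>)\<^esub> p2 \<in> extendable_auts A G"
proof -
  let ?Aut = "AutoGroup (G\<lparr>carrier := A\<rparr>)"
  interpret Aut: group ?Aut
    using group.AutoGroup[OF group_A] .
  define \<chi> where "\<chi> = p1 \<otimes>\<^bsub>?Aut\<^esub> inv\<^bsub>?Aut\<^esub> p2"
  have \<chi>: "\<chi> \<in> auto (G\<lparr>carrier := A\<rparr>)"
    using p1 p2 by (simp add: \<chi>_def flip: carrier_AutoGroup)
  have "\<chi> \<otimes>\<^bsub>?Aut\<^esub> p2 = p1"
    using p1 p2 by (simp add: \<chi>_def Aut.m_assoc flip: carrier_AutoGroup)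
  then have \<chi>_p2: "\<chi> (p2 a) = p1 a" if "a \<in> A" for a
    using AutoGroup_mult[OF \<chi> p2] that by (auto simp: compose_def)
  have "red (h (\<chi> b)) = red (h b)" if b: "b \<in> A" for b
  proof -
    obtain a where "a \<in> A" "b = p2 a"
      using bij_betw_imp_surj_on[OF bij_betw_auto[OF p2]] b by auto
    then show ?thesis
      using \<chi>_p2 red_eq_if_classify_eq[OF p1 p2 eq] by simp
  qed
  then interpret congruent_automorphism G A m sgn h \<chi>
    using \<chi> by unfold_locales
  show ?thesis
    using extendable by (simp add: \<chi>_def)
qed

lemma finite_index_extendable_auts:
  "finite (rcosets\<^bsub>AutoGroup (G\<lparr>carrier := A\<rparr>)\<^esub> extendable_auts A G)"
proof (rule group.finite_rcosets_if_fibres_in_cosets)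
  show "group (AutoGroup (G\<lparr>carrier := A\<rparr>))"
    using group.AutoGroup[OF group_A] .
  show "subgroup (extendable_auts A G) (AutoGroup (G\<lparr>carrier := A\<rparr>))"
    using subgroup_extendable_auts[OF subgroup_A] .
  show "finite (classify ` carrier (AutoGroup (G\<lparr>carrier := A\<rparr>)))"
    using finite_classify_image by (simp add: carrier_AutoGroup)
qed (use extendable_if_classify_eq in \<open>simp add: carrier_AutoGroup\<close>)

end

theorem mainTheorem19:
  fixes G (structure) and A :: "'a set" and m :: nat and sgn :: "'a \<Rightarrow> int"
  assumes "group G"
    and "characteristic A G"
    and "finite (rcosets\<^bsub>G\<^esub> A)"
    and "G\<lparr>carrier := A\<rparr> \<cong> Zpow m"
    and "\<forall>g\<in>carrier G. sgn g \<in> {1, -1}"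
    and "\<forall>g\<in>carrier G. \<forall>h\<in>carrier G. sgn (g \<otimes> h) = sgn g * sgn h"
    and "\<forall>g\<in>carrier G. \<forall>x\<in>A. inv g \<otimes> x \<otimes> g = x [^] sgn g"
  shows "finite (rcosets\<^bsub>AutoGroup (G\<lparr>carrier := A\<rparr>)\<^esub> extendable_auts A G)"
proof -
  obtain h where h: "h \<in> iso (G\<lparr>carrier := A\<rparr>) (Zpow m)"
    using assms(4) unfolding is_iso_def by blast
  interpret signed_lattice_extension G A m sgn h
    by (intro signed_lattice_extension.intro signed_lattice_extension_axioms.intro)
      (use assms h in \<open>auto simp: characteristic_def\<close>)
  show ?thesis
    by (rule finite_index_extendable_auts)
qed

end
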